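(* Let $R$ be a commutative ring with unity. Every element of $X(R)$ can be written as $\sum_{n=0}^\infty V^n\langle a_n\rangle$ for some $a_n\in R$ (the series converging in the product topology of $R^{\mathbb N_0}$).
   Context: Fix a prime $p$. $R^{\mathbb N_0}$ has the product topology; $V(r_0,r_1,\dots)=p(0,r_0,r_1,\dots)$; $\langle r\rangle=(r,r^p,r^{p^2},\dots)$; $X(R)$ is the closed subgroup of $R^{\mathbb N_0}$ generated by $\{V^n\langle r\rangle\mid n\in\mathbb N_0,r\in R\}$. *)

theory Defs
  imports "HOL-Analysis.Analysis"
begin

definition prodtop :: "(nat \<Rightarrow> 'a) topology" where
  "prodtop = product_topology (\<lambda>_. discrete_topology (UNIV :: 'a set)) UNIV"

definition Ver :: "nat \<Rightarrow> (nat \<Rightarrow> 'a::comm_ring_1) \<Rightarrow> (nat \<Rightarrow> 'a)" where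
  "Ver p r = (\<lambda>k. case k of 0 \<Rightarrow> 0 | Suc j \<Rightarrow> of_nat p * r j)"

definition teich :: "nat \<Rightarrow> 'a::comm_ring_1 \<Rightarrow> (nat \<Rightarrow> 'a)" where
  "teich p r = (\<lambda>k. r ^ (p ^ k))"

inductive_set add_subgroup_gen :: "(nat \<Rightarrow> 'b::ab_group_add) set \<Rightarrow> (nat \<Rightarrow> 'b) set" for S where
  zero: "(\<lambda>k. 0) \<in> add_subgroup_gen S"
| gen: "x \<in> S \<Longrightarrow> x \<in> add_subgroup_gen S"
| diff: "x \<in> add_subgroup_gen S \<Longrightarrow> y \<in> add_subgroup_gen S \<Longrightarrow> (\<lambda>k. x k - y k) \<in> add_subgroup_gen S"

text \<open>X(R): the closure of the subgroup generated by the V^n <r>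
  (the closure of a subgroup of a topological group is the smallest closed subgroup containing it).\<close>
definition XR :: "nat \<Rightarrow> (nat \<Rightarrow> 'a::comm_ring_1) set" where
  "XR p = prodtop closure_of add_subgroup_gen {(Ver p ^^ n) (teich p r) | n r. True}"

end

(* The k-th entry of the partial sum over n < N of V^n<a_n> is, as soon as N > k, the ghost
   component w_k(a) = sum over m <= k of p^m a_m^(p^(k-m)). So it suffices to show that every
   x in X(R) is a ghost vector w(a).

   Ghost vectors include the generators V^n<r> and are closed under subtraction. For the latter,
   pass to the monoid ring Z[R] of the multiplicative monoid of R: there [r] |-> [r^p] is a ring
   endomorphism phi lifting Frobenius, and by Dwork's lemma a sequence y is a ghost vector iff
   y_(k+1) = phi(y_k) mod p^(k+1) for all k. These congruences survive differences, and the
   evaluation [r] |-> r carries the result back to R.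

   Ghost vectors are also closed in the product topology. If w(c) agrees with x up to index k
   and w(a) up to k+1, write w(a) - w(c) = w(d); then w(d) vanishes up to k, which forces
   p^i d_i = 0 for i <= k and hence w_(k+1)(d) = p^(k+1) d_(k+1). So c can be corrected at
   index k+1 alone, and the corrected coordinates converge to a solution of w(a) = x. *)

theory Submission
  imports Defs "HOL-Library.Poly_Mapping"
begin

lemma diff_dvd_power_diff:
  fixes x y :: "'a::comm_ring_1"
  shows "x - y dvd x ^ n - y ^ n"
  by (metis dvd_triv_left power_diff_sumr2)

lemma frobenius_diff_dvd:
  fixes x y :: "'a::comm_ring_1"
  assumes "k \<ge> 1" and "of_nat p ^ k dvd x - y"
  shows "of_nat p ^ Suc k dvd x ^ p - y ^ p"
proof -
  define S where "S = (\<Sum>i<p. y ^ (p - Suc i) * x ^ i)"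
  have factor: "x ^ p - y ^ p = (x - y) * S"
    unfolding S_def by (rule power_diff_sumr2)
  have "S = (\<Sum>i<p. y ^ (p - Suc i) * (x ^ i - y ^ i)) + (\<Sum>i<p. y ^ (p - Suc i) * y ^ i)"
    unfolding S_def by (simp add: algebra_simps sum.distrib[symmetric])
  also have "(\<Sum>i<p. y ^ (p - Suc i) * y ^ i) = of_nat p * y ^ (p - 1)"
    by (simp add: sum.cong[of _ _ _ "\<lambda>_. y ^ (p - 1)"] flip: power_add)
  finally have S_split:
    "S = (\<Sum>i<p. y ^ (p - Suc i) * (x ^ i - y ^ i)) + of_nat p * y ^ (p - 1)" .
  have "of_nat p dvd x - y"
    using assms dvd_trans[OF dvd_power[of k "of_nat p"]] by simp
  then have "of_nat p dvd S"
    unfolding S_split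
    by (intro dvd_add dvd_sum dvd_mult dvd_triv_left dvd_trans[OF _ diff_dvd_power_diff])
  then show ?thesis
    unfolding factor power_Suc2 using assms(2) by (rule mult_dvd_mono[rotated])
qed

lemma frobenius_power_diff_dvd:
  fixes x y :: "'a::comm_ring_1"
  assumes "of_nat p ^ Suc k dvd x - y"
  shows "of_nat p ^ (Suc k + m) dvd x ^ p ^ m - y ^ p ^ m"
proof (induction m)
  case 0
  then show ?case using assms by simp
next
  case (Suc m)
  then have "of_nat p ^ Suc (Suc k + m) dvd (x ^ p ^ m) ^ p - (y ^ p ^ m) ^ p"
    by (intro frobenius_diff_dvd) simp_all
  then show ?case by (simp add: mult.commute flip: power_mult)
qed

lemma prime_dvd_add_power_diff:
  fixes x y :: "'a::comm_ring_1"
  assumes "prime p"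
  shows "of_nat p dvd (x + y) ^ p - x ^ p - y ^ p"
proof -
  have "p > 0" using assms by (simp add: prime_gt_0_nat)
  have "(x + y) ^ p = (\<Sum>k\<le>p. of_nat (p choose k) * x ^ k * y ^ (p - k))"
    by (rule binomial_ring)
  also have "\<dots> = (\<Sum>k\<in>{0<..<p}. of_nat (p choose k) * x ^ k * y ^ (p - k)) + x ^ p + y ^ p"
  proof -
    have "{..p} = insert 0 (insert p {0<..<p})" using \<open>p > 0\<close> by auto
    then show ?thesis using \<open>p > 0\<close> by (simp add: algebra_simps)
  qed
  finally have "(x + y) ^ p - x ^ p - y ^ p
      = (\<Sum>k\<in>{0<..<p}. of_nat (p choose k) * x ^ k * y ^ (p - k))"
    by simp
  also have "of_nat p dvd \<dots>"
  proof (intro dvd_sum dvd_mult2)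
    fix k assume "k \<in> {0<..<p}"
    then have "p dvd p choose k" using assms by (intro dvd_choose_prime) auto
    then show "of_nat p dvd (of_nat (p choose k) :: 'a)" by (metis dvd_def of_nat_mult)
  qed
  finally show ?thesis .
qed

definition ghost :: "nat \<Rightarrow> (nat \<Rightarrow> 'a::comm_ring_1) \<Rightarrow> nat \<Rightarrow> 'a" where
  "ghost p a k = (\<Sum>m\<le>k. of_nat p ^ m * a m ^ p ^ (k - m))"

lemma ghost_0 [simp]: "ghost p a 0 = a 0"
  by (simp add: ghost_def)

lemma ghost_Suc: "ghost p a (Suc k) = ghost p (\<lambda>m. a m ^ p) k + of_nat p ^ Suc k * a (Suc k)"
  unfolding ghost_def by (simp add: Suc_diff_le mult.commute flip: power_mult)

lemma ghost_cong: "(\<And>i. i \<le> k \<Longrightarrow> a i = b i) \<Longrightarrow> ghost p a k = ghost p b k"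
  unfolding ghost_def by (intro sum.cong) auto

lemma ghost_fun_upd_Suc:
  "ghost p (a(Suc k := t)) (Suc k) = ghost p a (Suc k) + of_nat p ^ Suc k * (t - a (Suc k))"
proof -
  have "ghost p (\<lambda>m. (a(Suc k := t)) m ^ p) k = ghost p (\<lambda>m. a m ^ p) k"
    by (rule ghost_cong) simp
  then show ?thesis by (simp add: ghost_Suc algebra_simps)
qed

lemma ghost_diff_dvd:
  assumes "\<And>m. m \<le> k \<Longrightarrow> of_nat p dvd a m - b m"
  shows "of_nat p ^ Suc k dvd ghost p a k - ghost p b k"
proof -
  have "ghost p a k - ghost p b k
      = (\<Sum>m\<le>k. of_nat p ^ m * (a m ^ p ^ (k - m) - b m ^ p ^ (k - m)))"
    by (simp add: ghost_def right_diff_distrib sum_subtractf)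
  also have "of_nat p ^ Suc k dvd \<dots>"
  proof (intro dvd_sum)
    fix m assume "m \<in> {..k}"
    then have "of_nat p ^ Suc (k - m) dvd a m ^ p ^ (k - m) - b m ^ p ^ (k - m)"
      using assms frobenius_power_diff_dvd[of p 0 "a m" "b m" "k - m"] by simp
    then have "of_nat p ^ (m + Suc (k - m))
        dvd of_nat p ^ m * (a m ^ p ^ (k - m) - b m ^ p ^ (k - m))"
      unfolding power_add by (rule mult_dvd_mono[OF dvd_refl])
    then show "of_nat p ^ Suc k dvd of_nat p ^ m * (a m ^ p ^ (k - m) - b m ^ p ^ (k - m))"
      using \<open>m \<in> {..k}\<close> by simp
  qed
  finally show ?thesis .
qed

lemma ex_ghost_eq_if_extendable:
  fixes y :: "nat \<Rightarrow> 'a::comm_ring_1"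
  assumes extendable: "\<And>k a. (\<forall>i\<le>k. ghost p a i = y i) \<Longrightarrow>
    of_nat p ^ Suc k dvd y (Suc k) - ghost p a (Suc k)"
  shows "\<exists>a. ghost p a = y"
proof -
  let ?solves = "\<lambda>k a. \<forall>i\<le>k. ghost p a i = y i"
  have "\<exists>f. \<forall>k. ?solves k (f k) \<and> (\<forall>i\<le>k. f (Suc k) i = f k i)"
  proof (rule dependent_nat_choice)
    show "\<exists>a. ?solves 0 a" by (rule exI[of _ "\<lambda>_. y 0"]) simp
  next
    fix a k assume "?solves k a"
    with extendable obtain t where t: "y (Suc k) - ghost p a (Suc k) = of_nat p ^ Suc k * t"
      by (meson dvdE)
    define a' where "a' = a(Suc k := a (Suc k) + t)"
    have "ghost p a' i = ghost p a i" if "i \<le> k" for i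
      using that by (intro ghost_cong) (simp add: a'_def)
    moreover have "ghost p a' (Suc k) = y (Suc k)"
      using t by (simp add: a'_def ghost_fun_upd_Suc algebra_simps)
    ultimately show "\<exists>a'. ?solves (Suc k) a' \<and> (\<forall>i\<le>k. a' i = a i)"
      using \<open>?solves k a\<close> by (intro exI[of _ a']) (auto simp: a'_def le_Suc_eq)
  qed
  then obtain f where solves: "\<And>k. ?solves k (f k)"
    and stable: "\<And>k i. i \<le> k \<Longrightarrow> f (Suc k) i = f k i"
    by blast
  have diagonal: "f l i = f i i" if "i \<le> l" for i l
    using that by (induction l) (auto simp: le_Suc_eq stable)
  have "ghost p (\<lambda>i. f i i) k = ghost p (f k) k" for k
    by (rule ghost_cong) (use diagonal in metis)
  then have "ghost p (\<lambda>i. f i i) k = y k" for k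
    using solves by simp
  then show ?thesis by blast
qed

definition is_ring_hom :: "('a::comm_ring_1 \<Rightarrow> 'b::comm_ring_1) \<Rightarrow> bool" where
  "is_ring_hom h \<longleftrightarrow>
    h 1 = 1 \<and> (\<forall>x y. h (x + y) = h x + h y) \<and> (\<forall>x y. h (x * y) = h x * h y)"

lemma
  assumes "is_ring_hom h"
  shows ring_hom_add: "h (x + y) = h x + h y"
    and ring_hom_mult: "h (x * y) = h x * h y"
    and ring_hom_one: "h 1 = 1"
  using assms by (simp_all add: is_ring_hom_def)

lemma ring_hom_zero: "is_ring_hom h \<Longrightarrow> h 0 = 0"
  using ring_hom_add[of h 0 0] by simp

lemma ring_hom_diff: "is_ring_hom h \<Longrightarrow> h (x - y) = h x - h y"
  using ring_hom_add[of h "x - y" y] by (simp add: eq_diff_eq)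

lemma ring_hom_sum: "is_ring_hom h \<Longrightarrow> h (sum f I) = (\<Sum>i\<in>I. h (f i))"
  by (induction I rule: infinite_finite_induct) (simp_all add: ring_hom_zero ring_hom_add)

lemma ring_hom_power: "is_ring_hom h \<Longrightarrow> h (x ^ n) = h x ^ n"
  by (induction n) (simp_all add: ring_hom_one ring_hom_mult)

lemma ring_hom_of_nat: "is_ring_hom h \<Longrightarrow> h (of_nat n) = of_nat n"
  by (induction n) (simp_all add: ring_hom_zero ring_hom_one ring_hom_add)

lemma ring_hom_ghost: "is_ring_hom h \<Longrightarrow> h (ghost p a k) = ghost p (\<lambda>m. h (a m)) k"
  by (simp add: ghost_def ring_hom_sum ring_hom_mult ring_hom_power ring_hom_of_nat)

locale frobenius_lift =
  fixes p :: nat and \<phi> :: "'a::comm_ring_1 \<Rightarrow> 'a"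
  assumes hom: "is_ring_hom \<phi>"
    and congruent: "of_nat p dvd x ^ p - \<phi> x"
begin

lemma ghost_Suc_congruent: "of_nat p ^ Suc k dvd ghost p a (Suc k) - \<phi> (ghost p a k)"
proof -
  have "ghost p a (Suc k) - \<phi> (ghost p a k)
      = (ghost p (\<lambda>m. a m ^ p) k - ghost p (\<lambda>m. \<phi> (a m)) k) + of_nat p ^ Suc k * a (Suc k)"
    by (simp add: ghost_Suc ring_hom_ghost[OF hom])
  also have "of_nat p ^ Suc k dvd \<dots>"
    by (intro dvd_add ghost_diff_dvd) (simp_all add: congruent)
  finally show ?thesis .
qed

lemma ex_ghost_eq_if_congruent:
  assumes "\<And>k. of_nat p ^ Suc k dvd y (Suc k) - \<phi> (y k)"
  shows "\<exists>a. ghost p a = y"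
proof (rule ex_ghost_eq_if_extendable)
  fix k a assume "\<forall>i\<le>k. ghost p a i = y i"
  then have "y (Suc k) - ghost p a (Suc k)
      = (y (Suc k) - \<phi> (y k)) - (ghost p a (Suc k) - \<phi> (ghost p a k))"
    by simp
  then show "of_nat p ^ Suc k dvd y (Suc k) - ghost p a (Suc k)"
    by (simp only:) (intro dvd_diff assms ghost_Suc_congruent)
qed

end

text \<open>The multiplicative monoid of a ring, written additively so that \<open>'a mul \<Rightarrow>\<^sub>0 int\<close>
  with the convolution product of \<open>Poly_Mapping\<close> is the integral monoid ring \<open>\<int>[R]\<close>.\<close>

datatype 'a mul = Mul (un_mul: 'a)

instantiation mul :: (comm_monoid_mult) comm_monoid_add
begin
definition zero_mul_def: "0 = Mul 1"
definition plus_mul_def: "x + y = Mul (un_mul x * un_mul y)"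
instance by standard (simp_all add: zero_mul_def plus_mul_def ac_simps)
end

lemma Mul_one [simp]: "Mul 1 = 0" and un_mul_zero [simp]: "un_mul 0 = 1"
  by (simp_all add: zero_mul_def)

type_synonym 'a monoid_ring = "'a mul \<Rightarrow>\<^sub>0 int"

definition monoid_ring_lift ::
    "('m::comm_monoid_add \<Rightarrow> 'b::comm_ring_1) \<Rightarrow> ('m \<Rightarrow>\<^sub>0 int) \<Rightarrow> 'b" where
  "monoid_ring_lift F x = (\<Sum>k\<in>Poly_Mapping.keys x. of_int (Poly_Mapping.lookup x k) * F k)"

lemma monoid_ring_lift_add:
  "monoid_ring_lift F (x + y) = monoid_ring_lift F x + monoid_ring_lift F y"
  unfolding monoid_ring_lift_def by (rule setsum_keys_plus_distrib) (simp_all add: distrib_right)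

lemma monoid_ring_lift_diff:
  "monoid_ring_lift F (x - y) = monoid_ring_lift F x - monoid_ring_lift F y"
  using monoid_ring_lift_add[of F "x - y" y] by (simp add: eq_diff_eq)

lemma monoid_ring_lift_single: "monoid_ring_lift F (Poly_Mapping.single k c) = of_int c * F k"
  by (cases "c = 0") (simp_all add: monoid_ring_lift_def)

lemma is_ring_hom_monoid_ring_lift:
  assumes F_zero: "F 0 = 1" and F_add: "\<And>a b. F (a + b) = F a * F b"
  shows "is_ring_hom (monoid_ring_lift F)"
proof -
  have mult_frag_of: "monoid_ring_lift F (frag_of a * y) = F a * monoid_ring_lift F y" for a y
    using subset_UNIV
  proof (induction y rule: frag_induction)
    case zero then show ?case by (simp add: monoid_ring_lift_def)
  next
    case (one b) then show ?case by (simp add: mult_single monoid_ring_lift_single F_add)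
  next
    case (diff u v) then show ?case by (simp add: right_diff_distrib monoid_ring_lift_diff)
  qed
  have "monoid_ring_lift F (x * y) = monoid_ring_lift F x * monoid_ring_lift F y" for x y
    using subset_UNIV
  proof (induction x rule: frag_induction)
    case zero then show ?case by (simp add: monoid_ring_lift_def)
  next
    case (one a) then show ?case by (simp add: mult_frag_of monoid_ring_lift_single)
  next
    case (diff u v) then show ?case by (simp add: left_diff_distrib monoid_ring_lift_diff)
  qed
  then show ?thesis
    by (simp add: is_ring_hom_def monoid_ring_lift_single F_zero monoid_ring_lift_add
        flip: single_one)
qed

definition monoid_ring_eval :: "'a::comm_ring_1 monoid_ring \<Rightarrow> 'a" where
  "monoid_ring_eval = monoid_ring_lift un_mul"

definition monoid_ring_frobenius :: "nat \<Rightarrow> 'a::comm_ring_1 monoid_ring \<Rightarrow> 'a monoid_ring" where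
  "monoid_ring_frobenius p = monoid_ring_lift (\<lambda>m. frag_of (Mul (un_mul m ^ p)))"

lemma is_ring_hom_monoid_ring_eval: "is_ring_hom monoid_ring_eval"
  unfolding monoid_ring_eval_def by (rule is_ring_hom_monoid_ring_lift) (simp_all add: plus_mul_def)

lemma monoid_ring_eval_frag_of [simp]: "monoid_ring_eval (frag_of (Mul r)) = r"
  by (simp add: monoid_ring_eval_def monoid_ring_lift_single)

lemma frag_of_Mul_power:
  "(frag_of (Mul r) :: 'a::comm_ring_1 monoid_ring) ^ n = frag_of (Mul (r ^ n))"
  by (induction n) (simp_all add: mult_single plus_mul_def)

lemma frobenius_lift_monoid_ring_frobenius:
  assumes "prime p"
  shows "frobenius_lift p (monoid_ring_frobenius p :: 'a::comm_ring_1 monoid_ring \<Rightarrow> _)"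
proof
  show "is_ring_hom (monoid_ring_frobenius p :: 'a monoid_ring \<Rightarrow> _)"
    unfolding monoid_ring_frobenius_def
    by (rule is_ring_hom_monoid_ring_lift) (simp_all add: plus_mul_def mult_single power_mult_distrib)
  fix x :: "'a monoid_ring"
  show "of_nat p dvd x ^ p - monoid_ring_frobenius p x"
    using subset_UNIV
  proof (induction x rule: frag_induction)
    case zero
    then show ?case
      using prime_gt_0_nat[OF assms]
      by (simp add: monoid_ring_frobenius_def monoid_ring_lift_def power_0_left)
  next
    case (one m)
    show ?case
      using frag_of_Mul_power[of "un_mul m" p]
      by (simp add: monoid_ring_frobenius_def monoid_ring_lift_single)
  next
    case (diff a b)
    have "(a - b) ^ p - monoid_ring_frobenius p (a - b)
        = (a ^ p - monoid_ring_frobenius p a) - (b ^ p - monoid_ring_frobenius p b)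
          - (((a - b) + b) ^ p - (a - b) ^ p - b ^ p)"
      by (simp add: monoid_ring_frobenius_def monoid_ring_lift_diff)
    then show ?case
      by (simp only:) (intro dvd_diff diff.IH prime_dvd_add_power_diff assms)
  qed
qed

lemma ex_ghost_eq_diff:
  fixes a b :: "nat \<Rightarrow> 'a::comm_ring_1"
  assumes "prime p"
  shows "\<exists>c. ghost p c = (\<lambda>k. ghost p a k - ghost p b k)"
proof -
  interpret frobenius_lift p "monoid_ring_frobenius p :: 'a monoid_ring \<Rightarrow> _"
    using assms by (rule frobenius_lift_monoid_ring_frobenius)
  let ?lift = "\<lambda>a m. frag_of (Mul (a m)) :: 'a monoid_ring"
  let ?y = "\<lambda>k. ghost p (?lift a) k - ghost p (?lift b) k"
  have "of_nat p ^ Suc k dvd ?y (Suc k) - monoid_ring_frobenius p (?y k)" for k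
  proof -
    have "?y (Suc k) - monoid_ring_frobenius p (?y k)
        = (ghost p (?lift a) (Suc k) - monoid_ring_frobenius p (ghost p (?lift a) k))
          - (ghost p (?lift b) (Suc k) - monoid_ring_frobenius p (ghost p (?lift b) k))"
      by (simp add: ring_hom_diff[OF hom])
    then show ?thesis
      by (simp only:) (intro dvd_diff ghost_Suc_congruent)
  qed
  then obtain c where "ghost p c = ?y"
    using ex_ghost_eq_if_congruent[of ?y] by blast
  have "ghost p (\<lambda>m. monoid_ring_eval (c m)) k = monoid_ring_eval (ghost p c k)" for k
    by (simp add: ring_hom_ghost[OF is_ring_hom_monoid_ring_eval])
  also have "monoid_ring_eval (ghost p c k) = ghost p a k - ghost p b k" for k
    using \<open>ghost p c = ?y\<close>
    by (simp add: ring_hom_diff[OF is_ring_hom_monoid_ring_eval]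
        ring_hom_ghost[OF is_ring_hom_monoid_ring_eval])
  finally show ?thesis by blast
qed

text \<open>\<open>R\<close> may have \<open>p\<close>-torsion, so a ghost vector vanishing up to index \<open>k\<close> need not have
  \<open>d i = 0\<close> there; \<open>p ^ i * d i = 0\<close> is all one gets, and it suffices.\<close>

lemma ghost_Suc_eq_if_torsion_prefix:
  assumes "p > 0" and "\<forall>i\<le>k. of_nat p ^ i * d i = 0"
  shows "ghost p d (Suc k) = of_nat p ^ Suc k * d (Suc k)"
proof -
  have "of_nat p ^ m * d m ^ p ^ (Suc k - m) = 0" if "m \<le> k" for m
  proof -
    obtain e where "p ^ (Suc k - m) = Suc e"
      using \<open>p > 0\<close> by (metis gr0_conv_Suc zero_less_power)
    then show ?thesis
      using assms(2) that by (simp add: mult.assoc[symmetric])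
  qed
  then show ?thesis by (simp add: ghost_def)
qed

lemma torsion_prefix_if_ghost_vanishes:
  assumes "p > 0" and "\<forall>i\<le>k. ghost p d i = 0"
  shows "\<forall>i\<le>k. of_nat p ^ i * d i = 0"
  using assms(2)
proof (induction k)
  case (Suc k)
  then have "ghost p d (Suc k) = of_nat p ^ Suc k * d (Suc k)"
    using \<open>p > 0\<close> by (intro ghost_Suc_eq_if_torsion_prefix) simp_all
  with Suc show ?case by (auto simp: le_Suc_eq)
qed simp

lemma ex_ghost_eq_if_approximable:
  fixes x :: "nat \<Rightarrow> 'a::comm_ring_1"
  assumes "prime p" and approx: "\<And>k. \<exists>a. \<forall>i\<le>k. ghost p a i = x i"
  shows "\<exists>a. ghost p a = x"
proof (rule ex_ghost_eq_if_extendable)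
  fix k c assume c: "\<forall>i\<le>k. ghost p c i = x i"
  obtain a where a: "\<forall>i\<le>Suc k. ghost p a i = x i"
    using approx by blast
  obtain d where d: "ghost p d = (\<lambda>i. ghost p a i - ghost p c i)"
    using ex_ghost_eq_diff[OF \<open>prime p\<close>] by blast
  have "p > 0" using \<open>prime p\<close> by (rule prime_gt_0_nat)
  have "\<forall>i\<le>k. ghost p d i = 0"
    using a c d by simp
  then have "ghost p d (Suc k) = of_nat p ^ Suc k * d (Suc k)"
    using \<open>p > 0\<close> by (intro ghost_Suc_eq_if_torsion_prefix torsion_prefix_if_ghost_vanishes)
  moreover have "x (Suc k) - ghost p c (Suc k) = ghost p d (Suc k)"
    using a d by simp
  ultimately show "of_nat p ^ Suc k dvd x (Suc k) - ghost p c (Suc k)"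
    by simp
qed

lemma Ver_power_apply: "(Ver p ^^ n) f k = (if k < n then 0 else of_nat p ^ n * f (k - n))"
proof (induction n arbitrary: k)
  case (Suc n)
  then show ?case by (cases k) (simp_all add: Ver_def)
qed simp

lemma sum_Ver_teich_eq_ghost:
  assumes "k < N"
  shows "(\<Sum>n<N. (Ver p ^^ n) (teich p (a n)) k) = ghost p a k"
proof -
  have "(\<Sum>n<N. (Ver p ^^ n) (teich p (a n)) k) = (\<Sum>n\<le>k. (Ver p ^^ n) (teich p (a n)) k)"
    using assms by (intro sum.mono_neutral_right) (auto simp: Ver_power_apply)
  also have "\<dots> = ghost p a k"
    unfolding ghost_def by (intro sum.cong) (simp_all add: Ver_power_apply teich_def)
  finally show ?thesis .
qed

lemma Ver_power_teich_eq_ghost: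
  assumes "p > 0"
  shows "(Ver p ^^ n) (teich p r) = ghost p (\<lambda>m. if m = n then r else 0)"
proof
  fix k
  have "ghost p (\<lambda>m. if m = n then r else 0) k
      = (\<Sum>m\<le>k. if m = n then of_nat p ^ n * r ^ p ^ (k - n) else 0)"
    unfolding ghost_def using assms by (intro sum.cong) (auto simp: power_0_left)
  also have "\<dots> = (Ver p ^^ n) (teich p r) k"
    by (simp add: Ver_power_apply teich_def)
  finally show "(Ver p ^^ n) (teich p r) k = ghost p (\<lambda>m. if m = n then r else 0) k" ..
qed

lemma add_subgroup_gen_Ver_teich_subset_range_ghost:
  assumes "prime p"
  shows "add_subgroup_gen {(Ver p ^^ n) (teich p r) | n r. True} \<subseteq> range (ghost p)"
proof
  have "p > 0" using assms by (rule prime_gt_0_nat)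
  fix y assume "y \<in> add_subgroup_gen {(Ver p ^^ n) (teich p r) | n r. True}"
  then show "y \<in> range (ghost p)"
  proof induction
    case zero
    show ?case
    proof (rule range_eqI[of _ _ "\<lambda>_. 0"])
      show "(\<lambda>k. 0) = ghost p (\<lambda>_. 0)"
        using \<open>p > 0\<close> by (simp add: ghost_def fun_eq_iff power_0_left)
    qed
  next
    case (gen x)
    then show ?case using Ver_power_teich_eq_ghost[OF \<open>p > 0\<close>] by auto
  next
    case (diff x y)
    then obtain a b where "x = ghost p a" and "y = ghost p b"
      by blast
    moreover obtain c where "ghost p c = (\<lambda>k. ghost p a k - ghost p b k)"
      using ex_ghost_eq_diff[OF assms] by blast
    ultimately show ?case
      by (metis rangeI)
  qed
qed

lemma limitin_prodtop_if_eventually_eq: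
  assumes "\<And>k. eventually (\<lambda>N. S N k = x k) F"
  shows "limitin prodtop S x F"
  unfolding prodtop_def limitin_componentwise
proof (intro conjI ballI)
  fix k
  show "limitin (discrete_topology UNIV) (\<lambda>N. S N k) (x k) F"
    unfolding limitin_def using assms[of k] by (auto elim: eventually_mono)
qed simp_all

lemma closure_of_prodtop_agrees_on_prefix:
  assumes "x \<in> prodtop closure_of T"
  shows "\<exists>b\<in>T. \<forall>i\<le>k. b i = x i"
proof -
  define U where "U = PiE UNIV (\<lambda>i. if i \<le> k then {x i} else UNIV)"
  have "finite {i. (if i \<le> k then {x i} else UNIV) \<noteq> UNIV}"
    by (rule finite_subset[of _ "{..k}"]) auto
  then have "openin prodtop U"
    unfolding prodtop_def U_def openin_PiE_gen by simp
  moreover have "x \<in> U" unfolding U_def by auto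
  ultimately obtain b where "b \<in> T" and "b \<in> U"
    using assms unfolding closure_of_def by blast
  then have "b i = x i" if "i \<le> k" for i
    using that unfolding U_def PiE_iff by (metis UNIV_I singletonD)
  with \<open>b \<in> T\<close> show ?thesis
    by blast
qed

theorem lemma2p6:
  fixes p :: nat and x :: "nat \<Rightarrow> 'a::comm_ring_1"
  assumes "prime p" and "x \<in> XR p"
  shows "\<exists>a :: nat \<Rightarrow> 'a.
           limitin prodtop (\<lambda>N. (\<lambda>k. \<Sum>n<N. (Ver p ^^ n) (teich p (a n)) k)) x sequentially"
proof -
  have "\<exists>a. \<forall>i\<le>k. ghost p a i = x i" for k
  proof -
    obtain b where "b \<in> add_subgroup_gen {(Ver p ^^ n) (teich p r) | n r. True}"
      and "\<forall>i\<le>k. b i = x i"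
      using closure_of_prodtop_agrees_on_prefix assms(2) unfolding XR_def by blast
    then show ?thesis
      using add_subgroup_gen_Ver_teich_subset_range_ghost[OF assms(1)] by blast
  qed
  then obtain a where a: "ghost p a = x"
    using ex_ghost_eq_if_approximable[OF assms(1)] by blast
  show ?thesis
  proof (rule exI[of _ a], rule limitin_prodtop_if_eventually_eq)
    fix k
    show "\<forall>\<^sub>F N in sequentially. (\<Sum>n<N. (Ver p ^^ n) (teich p (a n)) k) = x k"
    proof (rule eventually_sequentiallyI)
      fix N assume "Suc k \<le> N"
      then show "(\<Sum>n<N. (Ver p ^^ n) (teich p (a n)) k) = x k"
        using a by (simp add: sum_Ver_teich_eq_ghost)
    qed
  qed
qed

end
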